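(* Let $\ell$ be a positive even integer, let $n$ be a positive integer that is a multiple of $\ell/2$, and let $u:\{-n,\dots,n\}\to\mathbb{R}$ satisfy $u(j)=u(-j)$ for all $j$ and $\sum_{j=-n}^{n}u(j)=1$. Assume that there exists a polynomial $Q(z)=\sum_{k=0}^{m}b_kz^k$ (with complex coefficients) having no zeros in the open unit disk $\mathbb{D}=\{z\in\mathbb{C}:|z|<1\}$ such that $\widehat{u}(\xi)=|Q(e^{i\xi})|^{\ell}$ for all $\xi\in\mathbb{T}$. Then $$\sup_{0\neq f\in\ell^2(\mathbb{Z})}\frac{\|\nabla^{\ell}(u\ast f)\|_{\ell^2(\mathbb{Z})}}{\|f\|_{\ell^2(\mathbb{Z})}}\ \ge\ \left(\frac{2}{1+2n/\ell}\right)^{\ell}.$$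
   Context: Functions on $\{-n,\dots,n\}$ are regarded as functions on $\mathbb{Z}$ vanishing outside $\{-n,\dots,n\}$. The discrete derivative is $\nabla g(k)=g(k+1)-g(k)$ and $\nabla^{\ell}=\nabla(\nabla^{\ell-1})$. Convolution: $(u\ast f)(k)=\sum_{j\in\mathbb{Z}}u(j)f(k-j)$. $\mathbb{T}=\mathbb{R}/2\pi\mathbb{Z}$ and the Fourier transform is $\widehat{u}(\xi)=\sum_{k}u(k)e^{-ik\xi}$. The supremum is over nonzero (complex-valued) $f\in\ell^2(\mathbb{Z})$. *)

theory Defs
  imports "HOL-Analysis.Analysis" "HOL-Computational_Algebra.Polynomial"
begin

definition nabla :: "(int \<Rightarrow> complex) \<Rightarrow> (int \<Rightarrow> complex)" where
  "nabla g = (\<lambda>k. g (k + 1) - g k)"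

definition nabla_pow :: "nat \<Rightarrow> (int \<Rightarrow> complex) \<Rightarrow> (int \<Rightarrow> complex)" where
  "nabla_pow l = nabla ^^ l"

definition conv :: "(int \<Rightarrow> real) \<Rightarrow> (int \<Rightarrow> complex) \<Rightarrow> (int \<Rightarrow> complex)" where
  "conv u f = (\<lambda>k. \<Sum>\<^sub>\<infinity>j\<in>UNIV. complex_of_real (u j) * f (k - j))"

definition fourier :: "(int \<Rightarrow> real) \<Rightarrow> real \<Rightarrow> complex" where
  "fourier u \<xi> = (\<Sum>\<^sub>\<infinity>k\<in>UNIV. complex_of_real (u k) * exp (- \<i> * of_int k * of_real \<xi>))"

definition in_l2 :: "(int \<Rightarrow> complex) \<Rightarrow> bool" where
  "in_l2 f \<longleftrightarrow> (\<lambda>k. (cmod (f k))\<^sup>2) summable_on UNIV"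

definition l2norm :: "(int \<Rightarrow> complex) \<Rightarrow> real" where
  "l2norm f = sqrt (\<Sum>\<^sub>\<infinity>k\<in>UNIV. (cmod (f k))\<^sup>2)"

end

(* The operator f |-> nabla^l (u * f) is a finite stencil whose symbol at xi is
   (e^(i xi) - 1)^l u^(xi); testing it on truncated plane waves e^(i k xi) shows that its
   operator norm on l^2 is at least the modulus of the symbol, at every xi.

   With z = e^(i xi) and m = deg Q, the hypothesis turns into the polynomial identity
   z^(m l/2) z^n u^(xi) = z^n (Q(z) Q*(z))^(l/2), where Q*(z) = z^m conj (Q (1 / conj z)) has
   degree m because Q(0) <> 0; comparing degrees gives m l/2 <= n.

   Finally let N = m + 1 and let z_k be the roots of z^N = -1.  Then Q(1) = sum_k c_k Q(z_k)
   with |c_k| = 2 / (N |1 - z_k|) and sum_k |1 - z_k|^(-2) = N^2/4, so some z_k satisfies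
   |z_k - 1| |Q(z_k)| >= 2 |Q(1)| / N = 2 / N >= 2 / (1 + 2n/l), where |Q(1)| = 1 because
   sum u = 1.  Raising to the power l bounds the symbol at z_k from below. *)

theory Submission
  imports Defs "HOL-Real_Asymp.Real_Asymp"
begin

section \<open>Finite stencils on square-summable sequences\<close>

definition stencil :: "nat \<Rightarrow> (int \<Rightarrow> complex) \<Rightarrow> (int \<Rightarrow> complex) \<Rightarrow> int \<Rightarrow> complex" where
  "stencil K a f k = (\<Sum>d = - int K..int K. a d * f (k + d))"

definition stencil_symbol :: "nat \<Rightarrow> (int \<Rightarrow> complex) \<Rightarrow> real \<Rightarrow> complex" where
  "stencil_symbol K a \<xi> = (\<Sum>d = - int K..int K. a d * cis (of_int d * \<xi>))"

definition supported_in :: "nat \<Rightarrow> (int \<Rightarrow> complex) \<Rightarrow> bool" where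
  "supported_in K a \<longleftrightarrow> (\<forall>d. int K < \<bar>d\<bar> \<longrightarrow> a d = 0)"

definition nabla_coeffs :: "(int \<Rightarrow> complex) \<Rightarrow> int \<Rightarrow> complex" where
  "nabla_coeffs a d = a (d - 1) - a d"

lemma has_sum_sum:
  fixes f :: "'i \<Rightarrow> 'a \<Rightarrow> 'b::topological_comm_monoid_add"
  assumes "finite I" "\<And>i. i \<in> I \<Longrightarrow> (f i has_sum s i) A"
  shows "((\<lambda>x. \<Sum>i\<in>I. f i x) has_sum (\<Sum>i\<in>I. s i)) A"
  using assms by (induction I rule: finite_induct) (simp_all add: has_sum_add)

lemma has_sum_shift_int:
  fixes g :: "int \<Rightarrow> 'a::{topological_comm_monoid_add, t2_space}"
  assumes "g summable_on UNIV"
  shows "((\<lambda>k. g (k + d)) has_sum infsum g UNIV) UNIV"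
proof -
  have "bij_betw (\<lambda>k. k + d) UNIV UNIV"
    by (rule bij_betwI[where g = "\<lambda>k. k - d"]) auto
  then show ?thesis
    using has_sum_reindex_bij_betw[of "\<lambda>k. k + d" UNIV UNIV g] assms by simp
qed

lemma norm_sum_mult_sq_le:
  fixes a x :: "'i \<Rightarrow> complex"
  assumes "finite D"
  shows "(cmod (\<Sum>d\<in>D. a d * x d))\<^sup>2 \<le> (\<Sum>d\<in>D. cmod (a d)) * (\<Sum>d\<in>D. cmod (a d) * (cmod (x d))\<^sup>2)"
proof -
  have "cmod (\<Sum>d\<in>D. a d * x d) \<le> (\<Sum>d\<in>D. sqrt (cmod (a d)) * (sqrt (cmod (a d)) * cmod (x d)))"
    using norm_sum[of "\<lambda>d. a d * x d" D] by (simp add: norm_mult mult.assoc[symmetric])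
  then have "(cmod (\<Sum>d\<in>D. a d * x d))\<^sup>2
      \<le> (\<Sum>d\<in>D. sqrt (cmod (a d)) * (sqrt (cmod (a d)) * cmod (x d)))\<^sup>2"
    by (rule power_mono) simp
  also have "\<dots> \<le> (\<Sum>d\<in>D. (sqrt (cmod (a d)))\<^sup>2) * (\<Sum>d\<in>D. (sqrt (cmod (a d)) * cmod (x d))\<^sup>2)"
    by (rule Cauchy_Schwarz_ineq_sum)
  also have "\<dots> = (\<Sum>d\<in>D. cmod (a d)) * (\<Sum>d\<in>D. cmod (a d) * (cmod (x d))\<^sup>2)"
    by (simp add: power_mult_distrib)
  finally show ?thesis .
qed

lemma
  assumes "in_l2 f"
  shows in_l2_stencil: "in_l2 (stencil K a f)"
    and l2norm_stencil_le: "l2norm (stencil K a f) \<le> (\<Sum>d = - int K..int K. cmod (a d)) * l2norm f"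
proof -
  define C where "C = (\<Sum>d = - int K..int K. cmod (a d))"
  define S where "S = (\<Sum>\<^sub>\<infinity>k. (cmod (f k))\<^sup>2)"
  have "C \<ge> 0" "S \<ge> 0"
    by (simp_all add: C_def S_def sum_nonneg infsum_nonneg)
  have f_sq: "(\<lambda>k. (cmod (f k))\<^sup>2) summable_on UNIV"
    using assms by (simp add: in_l2_def)
  have "((\<lambda>k. \<Sum>d = - int K..int K. cmod (a d) * (cmod (f (k + d)))\<^sup>2)
      has_sum (\<Sum>d = - int K..int K. cmod (a d) * S)) UNIV"
    unfolding S_def by (intro has_sum_sum has_sum_cmult_right has_sum_shift_int f_sq) simp
  then have "((\<lambda>k. C * (\<Sum>d = - int K..int K. cmod (a d) * (cmod (f (k + d)))\<^sup>2))
      has_sum C * (\<Sum>d = - int K..int K. cmod (a d) * S)) UNIV"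
    by (rule has_sum_cmult_right)
  moreover have "C * (\<Sum>d = - int K..int K. cmod (a d) * S) = (C * sqrt S)\<^sup>2"
    using \<open>S \<ge> 0\<close> by (simp add: C_def sum_distrib_right[symmetric] power2_eq_square)
  ultimately have majorant: "((\<lambda>k. C * (\<Sum>d = - int K..int K. cmod (a d) * (cmod (f (k + d)))\<^sup>2))
      has_sum (C * sqrt S)\<^sup>2) UNIV"
    by simp
  have pointwise: "(cmod (stencil K a f k))\<^sup>2 \<le> C * (\<Sum>d = - int K..int K. cmod (a d) * (cmod (f (k + d)))\<^sup>2)" for k
    unfolding stencil_def C_def by (rule norm_sum_mult_sq_le) simp
  have stencil_sq: "(\<lambda>k. (cmod (stencil K a f k))\<^sup>2) summable_on UNIV"
    by (rule summable_on_comparison_test[OF has_sum_imp_summable[OF majorant]]) (use pointwise in auto)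
  then show "in_l2 (stencil K a f)"
    by (simp add: in_l2_def)
  have "(\<Sum>\<^sub>\<infinity>k. (cmod (stencil K a f k))\<^sup>2) \<le> (C * sqrt S)\<^sup>2"
    using has_sum_mono[OF has_sum_infsum[OF stencil_sq] majorant pointwise] .
  then have "l2norm (stencil K a f) \<le> sqrt ((C * sqrt S)\<^sup>2)"
    unfolding l2norm_def by (rule real_sqrt_le_mono)
  then show "l2norm (stencil K a f) \<le> C * l2norm f"
    using \<open>C \<ge> 0\<close> \<open>S \<ge> 0\<close> by (simp add: l2norm_def S_def)
qed

lemma stencil_supported_in_le:
  assumes "supported_in K a" "K \<le> K'"
  shows "stencil K' a f = stencil K a f"
  unfolding stencil_def
  by (intro ext sum.mono_neutral_right) (use assms in \<open>auto simp: supported_in_def\<close>)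

lemma supported_in_nabla_coeffs: "supported_in K a \<Longrightarrow> supported_in (Suc K) (nabla_coeffs a)"
  by (auto simp: supported_in_def nabla_coeffs_def)

lemma supported_in_nabla_coeffs_pow: "supported_in K a \<Longrightarrow> supported_in (K + i) ((nabla_coeffs ^^ i) a)"
  by (induction i) (simp_all add: supported_in_nabla_coeffs)

lemma nabla_stencil:
  assumes "supported_in K a"
  shows "nabla (stencil K a f) = stencil (Suc K) (nabla_coeffs a) f"
proof
  fix k
  have "(\<Sum>d = - int (Suc K)..int (Suc K). a (d - 1) * f (k + d))
      = (\<Sum>e = - int K - 2..int K. a e * f (k + 1 + e))"
    by (rule sum.reindex_bij_witness[where i = "\<lambda>e. e + 1" and j = "\<lambda>d. d - 1"])
       (auto simp: algebra_simps)
  also have "\<dots> = stencil K a f (k + 1)"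
    unfolding stencil_def
    by (rule sum.mono_neutral_right) (use assms in \<open>auto simp: supported_in_def\<close>)
  finally have shifted: "(\<Sum>d = - int (Suc K)..int (Suc K). a (d - 1) * f (k + d)) = stencil K a f (k + 1)" .
  have "(\<Sum>d = - int (Suc K)..int (Suc K). a d * f (k + d)) = stencil K a f k"
    using stencil_supported_in_le[OF assms, of "Suc K" f] by (simp add: stencil_def fun_eq_iff)
  with shifted show "nabla (stencil K a f) k = stencil (Suc K) (nabla_coeffs a) f k"
    by (simp add: nabla_def stencil_def[of "Suc K"] nabla_coeffs_def left_diff_distrib sum_subtractf)
qed

lemma nabla_pow_stencil:
  assumes "supported_in K a"
  shows "nabla_pow i (stencil K a f) = stencil (K + i) ((nabla_coeffs ^^ i) a) f"
proof (induction i)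
  case 0
  then show ?case by (simp add: nabla_pow_def)
next
  case (Suc i)
  then show ?case
    using nabla_stencil[OF supported_in_nabla_coeffs_pow[OF assms, of i]]
    by (simp add: nabla_pow_def)
qed

lemma stencil_cis:
  "stencil K a (\<lambda>k. cis (of_int k * \<xi>)) = (\<lambda>k. stencil_symbol K a \<xi> * cis (of_int k * \<xi>))"
  unfolding stencil_def stencil_symbol_def sum_distrib_right
  by (intro ext sum.cong) (simp_all add: cis_mult algebra_simps)

lemma stencil_symbol_nabla_coeffs:
  assumes "supported_in K a"
  shows "stencil_symbol (Suc K) (nabla_coeffs a) \<xi> = (cis \<xi> - 1) * stencil_symbol K a \<xi>"
proof -
  let ?e = "\<lambda>k. cis (of_int k * \<xi>)"
  have "stencil_symbol (Suc K) (nabla_coeffs a) \<xi> = stencil (Suc K) (nabla_coeffs a) ?e 0"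
    by (simp add: stencil_cis)
  also have "\<dots> = nabla (stencil K a ?e) 0"
    by (simp add: nabla_stencil[OF assms])
  also have "\<dots> = (cis \<xi> - 1) * stencil_symbol K a \<xi>"
    unfolding nabla_def stencil_cis by (simp add: algebra_simps)
  finally show ?thesis .
qed

lemma stencil_symbol_nabla_coeffs_pow:
  assumes "supported_in K a"
  shows "stencil_symbol (K + i) ((nabla_coeffs ^^ i) a) \<xi> = (cis \<xi> - 1) ^ i * stencil_symbol K a \<xi>"
proof (induction i)
  case 0
  then show ?case by simp
next
  case (Suc i)
  then show ?case
    using stencil_symbol_nabla_coeffs[OF supported_in_nabla_coeffs_pow[OF assms, of i]]
    by simp
qed

section \<open>The symbol bounds the operator norm from below\<close>

definition cis_window :: "real \<Rightarrow> nat \<Rightarrow> int \<Rightarrow> complex" where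
  "cis_window \<xi> N k = (if \<bar>k\<bar> \<le> int N then cis (of_int k * \<xi>) else 0)"

lemma cis_window_sq_has_sum: "((\<lambda>k. (cmod (cis_window \<xi> N k))\<^sup>2) has_sum (2 * real N + 1)) UNIV"
proof (rule has_sum_finite_neutralI[where B = "{- int N..int N}"])
  have "(\<Sum>k = - int N..int N. (cmod (cis_window \<xi> N k))\<^sup>2) = (\<Sum>k = - int N..int N. 1)"
    by (intro sum.cong) (auto simp: cis_window_def)
  then show "2 * real N + 1 = (\<Sum>k = - int N..int N. (cmod (cis_window \<xi> N k))\<^sup>2)"
    by simp
qed (auto simp: cis_window_def)

lemma in_l2_cis_window: "in_l2 (cis_window \<xi> N)"
  unfolding in_l2_def using cis_window_sq_has_sum by (rule has_sum_imp_summable)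

lemma l2norm_cis_window: "l2norm (cis_window \<xi> N) = sqrt (2 * real N + 1)"
  unfolding l2norm_def using cis_window_sq_has_sum by (simp add: has_sum_iff)

lemma cis_window_nonzero: "cis_window \<xi> N \<noteq> (\<lambda>_. 0)"
  by (auto simp: fun_eq_iff cis_window_def intro!: exI[of _ 0])

lemma l2norm_stencil_cis_window_ge:
  "sqrt (2 * real M + 1) * cmod (stencil_symbol K a \<xi>) \<le> l2norm (stencil K a (cis_window \<xi> (M + K)))"
proof -
  let ?g = "stencil K a (cis_window \<xi> (M + K))"
  have "?g k = stencil K a (\<lambda>k. cis (of_int k * \<xi>)) k" if "\<bar>k\<bar> \<le> int M" for k
    unfolding stencil_def using that by (intro sum.cong) (auto simp: cis_window_def)
  then have norm_g: "cmod (?g k) = cmod (stencil_symbol K a \<xi>)" if "\<bar>k\<bar> \<le> int M" for k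
    using that by (simp add: stencil_cis norm_mult)
  have "(2 * real M + 1) * (cmod (stencil_symbol K a \<xi>))\<^sup>2 = (\<Sum>k = - int M..int M. (cmod (?g k))\<^sup>2)"
    by (simp add: norm_g abs_le_iff)
  also have "\<dots> \<le> (\<Sum>\<^sub>\<infinity>k. (cmod (?g k))\<^sup>2)"
    using in_l2_stencil[OF in_l2_cis_window] by (intro finite_sum_le_infsum) (simp_all add: in_l2_def)
  finally have "sqrt ((2 * real M + 1) * (cmod (stencil_symbol K a \<xi>))\<^sup>2) \<le> l2norm ?g"
    unfolding l2norm_def by (rule real_sqrt_le_mono)
  then show ?thesis
    by (simp add: real_sqrt_mult)
qed

lemma norm_stencil_symbol_le_Sup:
  "cmod (stencil_symbol K a \<xi>) \<le> Sup {l2norm (stencil K a f) / l2norm f | f. in_l2 f \<and> f \<noteq> (\<lambda>_. 0)}"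
  (is "?s \<le> Sup ?R")
proof -
  define C where "C = (\<Sum>d = - int K..int K. cmod (a d))"
  have "bdd_above ?R"
  proof (rule bdd_aboveI, safe)
    fix f assume "in_l2 f"
    then have "l2norm (stencil K a f) \<le> C * l2norm f"
      unfolding C_def by (rule l2norm_stencil_le)
    moreover have "C \<ge> 0" "l2norm f \<ge> 0"
      by (simp_all add: C_def sum_nonneg l2norm_def infsum_nonneg)
    ultimately show "l2norm (stencil K a f) / l2norm f \<le> C"
      by (cases "l2norm f = 0") (simp_all add: divide_le_eq)
  qed
  have lower: "sqrt (2 * real M + 1) / sqrt (2 * real (M + K) + 1) * ?s \<le> Sup ?R" for M
  proof -
    let ?w = "cis_window \<xi> (M + K)"
    have "sqrt (2 * real M + 1) / sqrt (2 * real (M + K) + 1) * ?s \<le> l2norm (stencil K a ?w) / l2norm ?w"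
      using l2norm_stencil_cis_window_ge[of M K a \<xi>]
      by (simp add: l2norm_cis_window divide_right_mono)
    also have "\<dots> \<le> Sup ?R"
      using in_l2_cis_window cis_window_nonzero by (intro cSup_upper[OF _ \<open>bdd_above ?R\<close>]) blast
    finally show ?thesis .
  qed
  have "(\<lambda>M. sqrt (2 * real M + 1) / sqrt (2 * real (M + K) + 1)) \<longlonglongrightarrow> 1"
    by real_asymp
  then have "(\<lambda>M. sqrt (2 * real M + 1) / sqrt (2 * real (M + K) + 1) * ?s) \<longlonglongrightarrow> 1 * ?s"
    by (intro tendsto_mult tendsto_const)
  with lower show ?thesis
    by (auto intro: LIMSEQ_le_const2)
qed

section \<open>Convolution and Fourier transform of a finitely supported kernel\<close>

lemma infsum_int_supported:
  fixes g :: "int \<Rightarrow> 'a::{topological_comm_monoid_add, t2_space}"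
  assumes "\<And>j. int n < \<bar>j\<bar> \<Longrightarrow> g j = 0"
  shows "(\<Sum>\<^sub>\<infinity>j. g j) = (\<Sum>j = - int n..int n. g j)"
  by (intro infsumI has_sum_finite_neutralI) (auto simp: assms)

lemma sum_int_reflect: "(\<Sum>j = - int n..int n. g j) = (\<Sum>d = - int n..int n. g (- d))"
  by (rule sum.reindex_bij_witness[where i = uminus and j = uminus]) auto

lemma conv_eq_stencil:
  assumes "\<And>j. int n < \<bar>j\<bar> \<Longrightarrow> u j = 0"
  shows "conv u f = stencil n (\<lambda>d. complex_of_real (u (- d))) f"
proof
  fix k
  have "conv u f k = (\<Sum>j = - int n..int n. complex_of_real (u j) * f (k - j))"
    unfolding conv_def by (rule infsum_int_supported) (simp add: assms)
  also have "\<dots> = stencil n (\<lambda>d. complex_of_real (u (- d))) f k"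
    unfolding stencil_def by (subst sum_int_reflect) simp
  finally show "conv u f k = stencil n (\<lambda>d. complex_of_real (u (- d))) f k" .
qed

lemma fourier_eq_sum:
  assumes "\<And>j. int n < \<bar>j\<bar> \<Longrightarrow> u j = 0"
  shows "fourier u \<xi> = (\<Sum>j = - int n..int n. complex_of_real (u j) * cis (- of_int j * \<xi>))"
  unfolding fourier_def cis_conv_exp
  by (subst infsum_int_supported[of n]) (simp_all add: assms mult.assoc)

lemma fourier_eq_stencil_symbol:
  assumes "\<And>j. int n < \<bar>j\<bar> \<Longrightarrow> u j = 0"
  shows "fourier u \<xi> = stencil_symbol n (\<lambda>d. complex_of_real (u (- d))) \<xi>"
proof -
  have "fourier u \<xi> = (\<Sum>j = - int n..int n. complex_of_real (u j) * cis (- of_int j * \<xi>))"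
    by (rule fourier_eq_sum[OF assms])
  also have "\<dots> = (\<Sum>d = - int n..int n. complex_of_real (u (- d)) * cis (of_int d * \<xi>))"
    by (subst sum_int_reflect) simp
  finally show ?thesis
    by (simp add: stencil_symbol_def)
qed

lemma norm_symbol_le_Sup_nabla_pow_conv:
  assumes "\<And>j. int n < \<bar>j\<bar> \<Longrightarrow> u j = 0"
  shows "cmod ((cis \<xi> - 1) ^ l * fourier u \<xi>)
    \<le> Sup {l2norm (nabla_pow l (conv u f)) / l2norm f | f. in_l2 f \<and> f \<noteq> (\<lambda>_. 0)}"
proof -
  define a where "a = (\<lambda>d. complex_of_real (u (- d)))"
  have "supported_in n a"
    using assms by (simp add: supported_in_def a_def)
  have "(cis \<xi> - 1) ^ l * fourier u \<xi> = stencil_symbol (n + l) ((nabla_coeffs ^^ l) a) \<xi>"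
    unfolding stencil_symbol_nabla_coeffs_pow[OF \<open>supported_in n a\<close>]
    by (simp add: fourier_eq_stencil_symbol[OF assms] a_def)
  moreover have "nabla_pow l (conv u f) = stencil (n + l) ((nabla_coeffs ^^ l) a) f" for f
    using conv_eq_stencil[of n u] assms by (simp add: nabla_pow_stencil[OF \<open>supported_in n a\<close>] flip: a_def)
  ultimately show ?thesis
    by (simp add: norm_stencil_symbol_le_Sup)
qed

lemma norm_poly_one_eq_1:
  fixes Q :: "complex poly"
  assumes "\<And>j. int n < \<bar>j\<bar> \<Longrightarrow> u j = 0" "(\<Sum>j = - int n..int n. u j) = 1" "l > 0"
    and "fourier u 0 = complex_of_real ((cmod (poly Q 1)) ^ l)"
  shows "cmod (poly Q 1) = 1"
proof -
  have "(cmod (poly Q 1)) ^ l = 1 ^ l"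
    using assms(2,4) by (simp add: fourier_eq_sum[OF assms(1)] flip: of_real_sum of_real_power)
  then show ?thesis
    by (rule power_eq_imp_eq_base) (simp_all add: assms(3))
qed

section \<open>Degree of the spectral factor\<close>

lemma cis_pow_mult_fourier_eq_poly:
  assumes "\<And>j. int n < \<bar>j\<bar> \<Longrightarrow> u j = 0"
  obtains U :: "complex poly"
  where "degree U \<le> 2 * n" "\<And>\<xi>. poly U (cis \<xi>) = cis \<xi> ^ n * fourier u \<xi>"
proof
  define U where "U = (\<Sum>i\<le>2 * n. monom (complex_of_real (u (int n - int i))) i)"
  show "degree U \<le> 2 * n"
    unfolding U_def by (rule degree_sum_le) (auto intro: order.trans[OF degree_monom_le])
  fix \<xi>
  have "cis \<xi> ^ n * fourier u \<xi>
      = (\<Sum>d = - int n..int n. complex_of_real (u (- d)) * (cis \<xi> ^ n * cis (of_int d * \<xi>)))"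
    by (simp add: fourier_eq_stencil_symbol[OF assms] stencil_symbol_def sum_distrib_left mult_ac)
  also have "\<dots> = (\<Sum>i\<le>2 * n. complex_of_real (u (int n - int i)) * cis \<xi> ^ i)"
  proof (rule sum.reindex_bij_witness[where i = "\<lambda>i. int i - int n" and j = "\<lambda>d. nat (d + int n)"])
    fix d assume d: "d \<in> {- int n..int n}"
    then have "real (nat (d + int n)) = of_int d + real n"
      by simp
    then have "cis \<xi> ^ n * cis (of_int d * \<xi>) = cis \<xi> ^ nat (d + int n)"
      by (simp add: Complex.DeMoivre cis_mult algebra_simps)
    with d show "complex_of_real (u (int n - int (nat (d + int n)))) * cis \<xi> ^ nat (d + int n)
        = complex_of_real (u (- d)) * (cis \<xi> ^ n * cis (of_int d * \<xi>))"
      by simp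
  qed auto
  also have "\<dots> = poly U (cis \<xi>)"
    by (simp add: U_def poly_sum poly_monom)
  finally show "poly U (cis \<xi>) = cis \<xi> ^ n * fourier u \<xi>" ..
qed

lemma poly_reflect_cnj_on_circle:
  fixes Q :: "complex poly"
  assumes "cmod z = 1"
  shows "poly (reflect_poly (map_poly cnj Q)) z = z ^ degree Q * cnj (poly Q z)"
proof -
  have "cnj z * z = 1"
    using complex_norm_square[of z] assms by (simp add: mult.commute)
  then have "z \<noteq> 0" "inverse (cnj z) = z"
    by (auto dest: inverse_unique)
  then show ?thesis
    by (simp add: poly_reflect_poly_nz degree_map_poly)
qed

lemma poly_eqI_on_circle:
  fixes p q :: "complex poly"
  assumes "\<And>\<xi>. poly p (cis \<xi>) = poly q (cis \<xi>)"
  shows "p = q"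
proof -
  define M where "M = Suc (max (degree p) (degree q))"
  define A where "A = (\<lambda>k. cis (2 * pi * real k / real M)) ` {..<M}"
  have "card A = M"
    unfolding A_def using bij_betw_imp_inj_on[OF Complex.bij_betw_roots_unity[of M]]
    by (simp add: M_def card_image)
  then show ?thesis
    by (intro poly_eqI_degree[of A]) (auto simp: A_def M_def assms)
qed

lemma degree_mult_le_of_poly_eq_norm_pow_on_circle:
  fixes Q U :: "complex poly"
  assumes "coeff Q 0 \<noteq> 0" "degree U \<le> 2 * n"
    and "\<And>\<xi>. poly U (cis \<xi>) = cis \<xi> ^ n * complex_of_real ((cmod (poly Q (cis \<xi>))) ^ (2 * p))"
  shows "degree Q * p \<le> n"
proof -
  define R where "R = reflect_poly (map_poly cnj Q)"
  have "coeff (map_poly cnj Q) 0 \<noteq> 0"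
    using assms(1) by (simp add: coeff_map_poly)
  then have "degree R = degree Q" "Q \<noteq> 0" "R \<noteq> 0"
    using assms(1) by (auto simp: R_def degree_map_poly)
  have QR: "poly Q (cis \<xi>) * poly R (cis \<xi>) = cis \<xi> ^ degree Q * complex_of_real ((cmod (poly Q (cis \<xi>)))\<^sup>2)" for \<xi>
    using complex_norm_square[of "poly Q (cis \<xi>)"]
    by (simp add: R_def poly_reflect_cnj_on_circle mult_ac)
  have "monom 1 (degree Q * p) * U = monom 1 n * (Q * R) ^ p"
  proof (rule poly_eqI_on_circle)
    fix \<xi>
    have "poly (monom 1 (degree Q * p) * U) (cis \<xi>)
        = cis \<xi> ^ n * ((cis \<xi> ^ degree Q) ^ p * complex_of_real (((cmod (poly Q (cis \<xi>)))\<^sup>2) ^ p))"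
      by (simp add: poly_monom assms(3) power_mult)
    also have "\<dots> = poly (monom 1 n * (Q * R) ^ p) (cis \<xi>)"
      unfolding poly_mult poly_power poly_monom QR by (simp add: power_mult_distrib)
    finally show "poly (monom 1 (degree Q * p) * U) (cis \<xi>) = poly (monom 1 n * (Q * R) ^ p) (cis \<xi>)" .
  qed
  then have "n + degree Q * (2 * p) = degree (monom (1::complex) (degree Q * p) * U)"
    using \<open>degree R = degree Q\<close> \<open>Q \<noteq> 0\<close> \<open>R \<noteq> 0\<close>
    by (simp add: degree_mult_eq degree_monom_eq degree_power_eq)
  also have "\<dots> \<le> degree Q * p + 2 * n"
    using degree_mult_le[of "monom (1::complex) (degree Q * p)" U] assms(2)
    by (simp add: degree_monom_eq)
  finally show ?thesis
    by (simp add: mult.commute)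
qed

lemma degree_spectral_factor_le:
  fixes Q :: "complex poly"
  assumes "\<And>j. int n < \<bar>j\<bar> \<Longrightarrow> u j = 0" "coeff Q 0 \<noteq> 0" "even l"
    and "\<And>\<xi>. fourier u \<xi> = complex_of_real ((cmod (poly Q (cis \<xi>))) ^ l)"
  shows "degree Q * (l div 2) \<le> n"
proof -
  obtain U where "degree U \<le> 2 * n" "\<And>\<xi>. poly U (cis \<xi>) = cis \<xi> ^ n * fourier u \<xi>"
    using cis_pow_mult_fourier_eq_poly[of n u] assms(1) by blast
  with assms(2-4) show ?thesis
    by (intro degree_mult_le_of_poly_eq_norm_pow_on_circle[of Q U]) auto
qed

section \<open>Interpolation at the roots of minus one\<close>

lemma neg_div_one_minus_sq_on_circle:
  fixes z :: complex
  assumes "cmod z = 1" "z \<noteq> 1"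
  shows "- z / (1 - z)\<^sup>2 = complex_of_real (1 / (cmod (1 - z))\<^sup>2)"
proof -
  have "z * cnj z = 1"
    using assms(1) complex_norm_square[of z] by simp
  then have "z \<noteq> 0" "cnj z = 1 / z"
    by (auto simp: inverse_eq_divide dest: inverse_unique)
  have "complex_of_real ((cmod (1 - z))\<^sup>2) = (1 - z) * (1 - cnj z)"
    using complex_norm_square[of "1 - z"] by simp
  also have "\<dots> = - (1 - z)\<^sup>2 / z"
    using \<open>z \<noteq> 0\<close> \<open>cnj z = 1 / z\<close> by (simp add: field_simps power2_eq_square)
  finally have "complex_of_real ((cmod (1 - z))\<^sup>2) = - (1 - z)\<^sup>2 / z" .
  then show ?thesis
    using assms(2) \<open>z \<noteq> 0\<close> by (simp add: field_simps)
qed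

lemma poly_eq_sum_lessThan:
  fixes p :: "'a::comm_semiring_1 poly"
  assumes "degree p < N"
  shows "poly p x = (\<Sum>j<N. coeff p j * x ^ j)"
  unfolding poly_altdef
  by (rule sum.mono_neutral_left) (use assms in \<open>auto simp: coeff_eq_0\<close>)

locale roots_of_minus_one =
  fixes N :: nat
  assumes N_pos: "N > 0"
begin

definition root :: "nat \<Rightarrow> complex" where
  "root k = cis (real (2 * k + 1) * pi / real N)"

definition weight :: "nat \<Rightarrow> complex" where
  "weight k = - (\<Sum>i = 1..N. root k ^ i) / of_nat N"

lemma root_eq_power: "root k = cis (pi / real N) ^ (2 * k + 1)"
  unfolding root_def Complex.DeMoivre by (simp only: times_divide_eq_right)

lemma root_pow_N: "root k ^ N = -1"
proof -
  have "root k ^ N = cis (real (2 * k + 1) * pi)"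
    using N_pos by (simp add: root_def Complex.DeMoivre)
  also have "\<dots> = -1"
    by (simp only: cis.ctr cos_npi sin_npi) (simp add: complex_eq_iff)
  finally show ?thesis .
qed

lemma norm_root: "cmod (root k) = 1"
  by (simp add: root_def)

lemma root_ne_1: "root k \<noteq> 1"
  using root_pow_N[of k] by auto

lemma sum_root_pow:
  assumes "1 \<le> q" "q < 2 * N"
  shows "(\<Sum>k<N. root k ^ q) = (if q = N then - of_nat N else 0)"
proof (cases "q = N")
  case True
  then show ?thesis by (simp add: root_pow_N)
next
  case False
  have "\<not> N dvd q"
  proof
    assume "N dvd q"
    then obtain t where "q = N * t" ..
    with assms False have "0 < t" "t < 2" "t \<noteq> 1"
      by auto
    then show False
      by linarith
  qed
  define r where "r = cis (pi / real N) ^ (2 * q)"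
  have "r = cis (real (2 * q) * (pi / real N))"
    by (simp only: r_def Complex.DeMoivre)
  also have "\<dots> = exp (2 * of_real pi * \<i> * of_nat q / of_nat N)"
    by (simp add: cis_conv_exp field_simps)
  finally have "r = exp (2 * of_real pi * \<i> * of_nat q / of_nat N)" .
  then have "r \<noteq> 1"
    using complex_root_unity_eq_1[of N q] N_pos \<open>\<not> N dvd q\<close> by simp
  have "r ^ N = (cis (pi / real N) ^ N) ^ (2 * q)"
    by (simp add: r_def mult.commute flip: power_mult)
  also have "\<dots> = 1"
    using N_pos by (simp add: Complex.DeMoivre)
  finally have "r ^ N = 1" .
  have "(\<Sum>k<N. root k ^ q) = cis (pi / real N) ^ q * (\<Sum>k<N. r ^ k)"
    by (simp add: root_eq_power r_def sum_distrib_left algebra_simps flip: power_mult power_add)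
  also have "\<dots> = 0"
    using geometric_sum[OF \<open>r \<noteq> 1\<close>, of N] \<open>r ^ N = 1\<close> by simp
  finally show ?thesis
    using False by simp
qed

lemma sum_weight_root_pow:
  assumes "j < N"
  shows "(\<Sum>k<N. weight k * root k ^ j) = 1"
proof -
  have "(\<Sum>k<N. weight k * root k ^ j) = - (\<Sum>k<N. \<Sum>i = 1..N. root k ^ (i + j)) / of_nat N"
    by (simp add: weight_def sum_distrib_right sum_divide_distrib power_add sum_negf)
  also have "\<dots> = - (\<Sum>i = 1..N. \<Sum>k<N. root k ^ (i + j)) / of_nat N"
    by (subst sum.swap) (rule refl)
  also have "\<dots> = - (\<Sum>i = 1..N. if i = N - j then - of_nat N else 0) / of_nat N"
    using assms by (intro arg_cong[where f = "\<lambda>s. - s / of_nat N"] sum.cong) (auto simp: sum_root_pow)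
  also have "\<dots> = 1"
    using assms N_pos by simp
  finally show ?thesis .
qed

lemma poly_one_eq_sum_weight:
  fixes Q :: "complex poly"
  assumes "degree Q < N"
  shows "poly Q 1 = (\<Sum>k<N. weight k * poly Q (root k))"
proof -
  have "poly Q 1 = (\<Sum>j<N. coeff Q j * (\<Sum>k<N. weight k * root k ^ j))"
    unfolding poly_eq_sum_lessThan[OF assms] by (intro sum.cong) (simp_all add: sum_weight_root_pow)
  also have "\<dots> = (\<Sum>k<N. weight k * poly Q (root k))"
    unfolding poly_eq_sum_lessThan[OF assms] sum_distrib_left by (subst sum.swap) (simp add: mult_ac)
  finally show ?thesis .
qed

lemma sum_root_pow_lessThan: "(\<Sum>i<N. root k ^ i) = 2 / (1 - root k)"
  using geometric_sum[OF root_ne_1[of k], of N] root_pow_N[of k] root_ne_1[of k]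
  by (simp add: field_simps)

lemma weight_eq: "weight k = - 2 * root k / (of_nat N * (1 - root k))"
proof -
  have "(\<Sum>i = 1..N. root k ^ i) = root k * (\<Sum>i<N. root k ^ i)"
    by (simp add: sum.atLeast1_atMost_eq sum_distrib_left)
  then show ?thesis
    by (simp add: weight_def sum_root_pow_lessThan mult_ac)
qed

lemma sum_inverse_norm_one_minus_root_sq: "(\<Sum>k<N. 1 / (cmod (1 - root k))\<^sup>2) = (real N)\<^sup>2 / 4"
proof -
  have "of_nat N = (\<Sum>j<N. \<Sum>k<N. weight k * root k ^ j)"
    by (simp add: sum_weight_root_pow)
  also have "\<dots> = (\<Sum>k<N. weight k * (\<Sum>j<N. root k ^ j))"
    unfolding sum_distrib_left by (rule sum.swap)
  also have "\<dots> = (\<Sum>k<N. complex_of_real (4 / real N * (1 / (cmod (1 - root k))\<^sup>2)))"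
  proof (rule sum.cong[OF refl])
    fix k
    have "weight k * (\<Sum>j<N. root k ^ j) = 4 / of_nat N * (- root k / (1 - root k)\<^sup>2)"
      by (simp add: weight_eq sum_root_pow_lessThan power2_eq_square)
    then show "weight k * (\<Sum>j<N. root k ^ j) = complex_of_real (4 / real N * (1 / (cmod (1 - root k))\<^sup>2))"
      unfolding neg_div_one_minus_sq_on_circle[OF norm_root root_ne_1] by simp
  qed
  also have "\<dots> = complex_of_real (4 / real N * (\<Sum>k<N. 1 / (cmod (1 - root k))\<^sup>2))"
    by (simp add: sum_distrib_left)
  finally have "complex_of_real (real N) = complex_of_real (4 / real N * (\<Sum>k<N. 1 / (cmod (1 - root k))\<^sup>2))"
    by simp
  then have "real N = 4 / real N * (\<Sum>k<N. 1 / (cmod (1 - root k))\<^sup>2)"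
    by (simp only: of_real_eq_iff)
  then show ?thesis
    using N_pos by (simp add: field_simps power2_eq_square)
qed

text \<open>Since \<open>cmod (weight k) = 2 / (N * cmod (1 - root k))\<close>, the formula
  \<open>poly_one_eq_sum_weight\<close> averages \<open>cmod (1 - root k) * cmod (poly Q (root k))\<close> with the
  weights \<open>2 / (N * (cmod (1 - root k))\<^sup>2)\<close>, whose total is \<open>N / 2\<close>.\<close>

lemma exists_root_poly_ge:
  fixes Q :: "complex poly"
  assumes "degree Q < N"
  shows "\<exists>k<N. 2 * cmod (poly Q 1) / real N \<le> cmod (root k - 1) * cmod (poly Q (root k))"
proof -
  define M where "M = Max ((\<lambda>k. cmod (1 - root k) * cmod (poly Q (root k))) ` {..<N})"
  have M_ge: "cmod (1 - root k) * cmod (poly Q (root k)) \<le> M" if "k < N" for k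
    unfolding M_def using that by (intro Max_ge) auto
  have "M \<in> (\<lambda>k. cmod (1 - root k) * cmod (poly Q (root k))) ` {..<N}"
    unfolding M_def using N_pos by (intro Max_in) auto
  moreover have "cmod (poly Q 1) \<le> M * real N / 2"
  proof -
    have "cmod (poly Q 1) \<le> (\<Sum>k<N. cmod (weight k * poly Q (root k)))"
      unfolding poly_one_eq_sum_weight[OF assms] by (rule norm_sum)
    also have "\<dots> = (\<Sum>k<N. 2 / real N * (cmod (1 - root k) * cmod (poly Q (root k))) / (cmod (1 - root k))\<^sup>2)"
      using root_ne_1 by (intro sum.cong) (simp_all add: weight_eq norm_mult norm_divide norm_root power2_eq_square)
    also have "\<dots> \<le> (\<Sum>k<N. 2 / real N * M * (1 / (cmod (1 - root k))\<^sup>2))"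
      using M_ge by (intro sum_mono) (simp add: divide_right_mono)
    also have "\<dots> = 2 / real N * M * (\<Sum>k<N. 1 / (cmod (1 - root k))\<^sup>2)"
      by (simp only: sum_distrib_left)
    also have "\<dots> = M * real N / 2"
      unfolding sum_inverse_norm_one_minus_root_sq using N_pos by (simp add: power2_eq_square)
    finally show ?thesis .
  qed
  ultimately show ?thesis
    using N_pos by (auto simp: norm_minus_commute field_simps)
qed

end

lemma exists_cis_poly_ge:
  fixes Q :: "complex poly"
  assumes "degree Q < N"
  shows "\<exists>\<xi>. 2 * cmod (poly Q 1) / real N \<le> cmod (cis \<xi> - 1) * cmod (poly Q (cis \<xi>))"
proof -
  interpret roots_of_minus_one N
    using assms by unfold_locales simp
  show ?thesis
    using exists_root_poly_ge[OF assms] unfolding root_def by blast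
qed

theorem proposition1p3:
  fixes l n :: nat and u :: "int \<Rightarrow> real"
  assumes "l > 0" and "even l"
    and "n > 0" and "(l div 2) dvd n"
    and "\<forall>j. (j < - int n \<or> j > int n) \<longrightarrow> u j = 0"
    and "\<forall>j. u j = u (- j)"
    and "(\<Sum>j = - int n..int n. u j) = 1"
    and "\<exists>Q :: complex poly. (\<forall>z. cmod z < 1 \<longrightarrow> poly Q z \<noteq> 0) \<and>
           (\<forall>\<xi>::real. fourier u \<xi> = complex_of_real ((cmod (poly Q (cis \<xi>))) ^ l))"
  shows "Sup {l2norm (nabla_pow l (conv u f)) / l2norm f | f. in_l2 f \<and> f \<noteq> (\<lambda>_. 0)}
           \<ge> (2 / (1 + 2 * real n / real l)) ^ l"
proof -
  obtain Q :: "complex poly" where Q_nz: "\<forall>z. cmod z < 1 \<longrightarrow> poly Q z \<noteq> 0"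
    and fourier_Q: "\<forall>\<xi>. fourier u \<xi> = complex_of_real ((cmod (poly Q (cis \<xi>))) ^ l)"
    using assms(8) by blast
  have supp: "u j = 0" if "int n < \<bar>j\<bar>" for j
    using assms(5) that by (cases "j \<ge> 0") auto
  have "cmod (poly Q 1) = 1"
    using fourier_Q assms(1,7) by (intro norm_poly_one_eq_1[of n u]) (simp_all add: supp)
  have "coeff Q 0 \<noteq> 0"
    using Q_nz by (simp flip: poly_0_coeff_0)
  then have "real (degree Q) * real (l div 2) \<le> real n"
    using degree_spectral_factor_le[of n u Q l] supp assms(2) fourier_Q
    by (metis of_nat_le_iff of_nat_mult)
  then have "real (Suc (degree Q)) \<le> 1 + 2 * real n / real l"
    using assms(1,2) by (auto elim!: evenE simp: field_simps)
  then have "2 / (1 + 2 * real n / real l) \<le> 2 / real (Suc (degree Q))"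
    by (intro divide_left_mono) auto
  moreover obtain \<xi> where "2 * cmod (poly Q 1) / real (Suc (degree Q)) \<le> cmod (cis \<xi> - 1) * cmod (poly Q (cis \<xi>))"
    using exists_cis_poly_ge[of Q "Suc (degree Q)"] by auto
  ultimately have "(2 / (1 + 2 * real n / real l)) ^ l \<le> (cmod (cis \<xi> - 1) * cmod (poly Q (cis \<xi>))) ^ l"
    using \<open>cmod (poly Q 1) = 1\<close> by (intro power_mono) auto
  also have "\<dots> = cmod ((cis \<xi> - 1) ^ l * fourier u \<xi>)"
    using fourier_Q by (simp add: norm_mult norm_power power_mult_distrib)
  also have "\<dots> \<le> Sup {l2norm (nabla_pow l (conv u f)) / l2norm f | f. in_l2 f \<and> f \<noteq> (\<lambda>_. 0)}"
    using supp by (rule norm_symbol_le_Sup_nabla_pow_conv)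
  finally show ?thesis .
qed

end
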